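(* Let $G$ be the Boolean group of all finite subsets of $\mathbb{Z}$ with symmetric difference as the group operation (identity $\emptyset$), and let $$A=G\setminus\{\{x,y\}: x,y\in\mathbb{Z},\ 0\ne x-y\in\{z^3:z\in\mathbb{Z}\}\}.$$ Then: (i) $A$ is a Ramsey $\vec m$-product subset of $G$ for every $\vec m=(m_1,\dots,m_k)\in(2\mathbb{Z}+1)^k$ with $k\ge2$; (ii) there is no large subset $B$ of $G$ with $BB^{-1}\subseteq A$; (iii) $A$ is not a neighbourhood of the identity in any totally bounded group topology on $G$.
   Context: A subset $A$ of a group $G$ is a Ramsey $\vec m$-product subset, for $\vec m\in\mathbb{Z}^k$, if every infinite $X\subseteq G$ contains pairwise distinct $x_1,\dots,x_k\in X$ with $x_{\sigma(1)}^{m_1}\cdots x_{\sigma(k)}^{m_k}\in A$ for every $\sigma\in S_k$. A subset $B$ of $G$ is large if $G=FB$ for some finite $F\subseteq G$. *)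

theory Defs
  imports "HOL-Analysis.Analysis" "HOL-Algebra.Group" "HOL-Combinatorics.Permutations"
begin

text \<open>Product x_{sigma(1)}^{m_1} ... x_{sigma(k)}^{m_k}, with k = length ms, indices 0..k-1.\<close>
definition perm_power_prod :: "('a, 'b) monoid_scheme \<Rightarrow> int list \<Rightarrow> (nat \<Rightarrow> 'a) \<Rightarrow> (nat \<Rightarrow> nat) \<Rightarrow> 'a" where
  "perm_power_prod G ms x \<sigma> =
     foldr (\<lambda>i acc. (x (\<sigma> i) [^]\<^bsub>G\<^esub> (ms ! i)) \<otimes>\<^bsub>G\<^esub> acc) [0..<length ms] \<one>\<^bsub>G\<^esub>"

definition ramsey_product_subset :: "('a, 'b) monoid_scheme \<Rightarrow> int list \<Rightarrow> 'a set \<Rightarrow> bool" where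
  "ramsey_product_subset G ms A \<longleftrightarrow> A \<subseteq> carrier G \<and>
     (\<forall>X. X \<subseteq> carrier G \<and> infinite X \<longrightarrow>
        (\<exists>x. x ` {..<length ms} \<subseteq> X \<and> inj_on x {..<length ms} \<and>
             (\<forall>\<sigma>. \<sigma> permutes {..<length ms} \<longrightarrow> perm_power_prod G ms x \<sigma> \<in> A)))"

definition large_subset :: "('a, 'b) monoid_scheme \<Rightarrow> 'a set \<Rightarrow> bool" where
  "large_subset G B \<longleftrightarrow> B \<subseteq> carrier G \<and>
     (\<exists>F. finite F \<and> F \<subseteq> carrier G \<and> carrier G = (\<Union>f\<in>F. (\<lambda>b. f \<otimes>\<^bsub>G\<^esub> b) ` B))"

definition group_topology :: "('a, 'b) monoid_scheme \<Rightarrow> 'a topology \<Rightarrow> bool" where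
  "group_topology G T \<longleftrightarrow> topspace T = carrier G \<and>
     continuous_map (prod_topology T T) T (\<lambda>(x, y). x \<otimes>\<^bsub>G\<^esub> y) \<and>
     continuous_map T T (\<lambda>x. inv\<^bsub>G\<^esub> x)"

definition totally_bounded_group_topology :: "('a, 'b) monoid_scheme \<Rightarrow> 'a topology \<Rightarrow> bool" where
  "totally_bounded_group_topology G T \<longleftrightarrow> group_topology G T \<and>
     (\<forall>U. openin T U \<and> \<one>\<^bsub>G\<^esub> \<in> U \<longrightarrow>
        (\<exists>F. finite F \<and> F \<subseteq> carrier G \<and> carrier G = (\<Union>f\<in>F. (\<lambda>u. f \<otimes>\<^bsub>G\<^esub> u) ` U)))"

definition nhd_of_identity :: "('a, 'b) monoid_scheme \<Rightarrow> 'a topology \<Rightarrow> 'a set \<Rightarrow> bool" where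
  "nhd_of_identity G T A \<longleftrightarrow> (\<exists>U. openin T U \<and> \<one>\<^bsub>G\<^esub> \<in> U \<and> U \<subseteq> A)"

definition BoolZ :: "int set monoid" where
  "BoolZ = \<lparr>carrier = {S. finite S}, mult = (\<lambda>S T. (S - T) \<union> (T - S)), one = {}\<rparr>"

definition cubeA :: "int set set" where
  "cubeA = carrier BoolZ - {{x, y} | x y. x - y \<noteq> 0 \<and> (\<exists>z::int. x - y = z ^ 3)}"

end

theory Submission
  imports Defs
begin

text \<open>
  Write \<open>\<Delta>\<close> for the group operation. Odd powers act trivially, so every permuted product of
  distinct \<open>x\<^sub>1, \<dots>, x\<^sub>k\<close> equals \<open>x\<^sub>1 \<Delta> \<dots> \<Delta> x\<^sub>k\<close>. For (i) it suffices to find, in any infinite family of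
  finite sets and for any finite \<open>T\<close>, members \<open>y \<noteq> z\<close> with \<open>T \<Delta> y \<Delta> z\<close> not a cube pair. If
  \<open>T \<noteq> {}\<close>, take \<open>y, z\<close> with the same trace on \<open>T\<close> and \<open>|y \<Delta> z| \<ge> 2\<close>, so that \<open>|T \<Delta> y \<Delta> z| \<ge> 3\<close>.
  If \<open>T = {}\<close> and every \<open>y \<Delta> z\<close> were a cube pair, translating by one member would give infinitely
  many cube pairs through a common point, whose union is an infinite set of integers with
  pairwise cube differences; but such a set is bounded, because \<open>x\<^sup>3 = x\<^sub>1\<^sup>3 + y\<^sup>3\<close> with
  \<open>x\<^sub>1, y > 0\<close> forces \<open>x \<le> x\<^sub>1\<^sup>3\<close>.

  For (ii), if \<open>G = F B\<close> with \<open>F\<close> finite, colour \<open>n \<in> \<int>\<close> by some \<open>f \<in> F\<close> with \<open>{n} \<in> f B\<close>. The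
  polynomial van der Waerden theorem for \<open>n\<^sup>3\<close>, proved by PET induction over families of
  polynomials of degree at most 3, gives \<open>a\<close> and \<open>n > 0\<close> such that \<open>a\<close> and \<open>a + n\<^sup>3\<close> have the same
  colour; then \<open>B B\<^sup>-\<^sup>1\<close> contains the cube pair \<open>{a, a + n\<^sup>3}\<close>. For (iii), an identity neighbourhood
  inside \<open>A\<close> contains \<open>V V\<close> for an open \<open>V \<ni> {}\<close>, and \<open>V\<close> is large by total boundedness,
  contradicting (ii).
\<close>

section \<open>Polynomial van der Waerden theorem for cubic polynomials\<close>

type_synonym cubic = "int \<times> int \<times> int"

definition cubic_eval :: "cubic \<Rightarrow> int \<Rightarrow> int" where
  "cubic_eval p n = fst p * n + fst (snd p) * n ^ 2 + snd (snd p) * n ^ 3"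

definition cubic_degree :: "cubic \<Rightarrow> nat" where
  "cubic_degree p =
     (if snd (snd p) \<noteq> 0 then 3 else if fst (snd p) \<noteq> 0 then 2 else if fst p \<noteq> 0 then 1 else 0)"

definition cubic_lead :: "cubic \<Rightarrow> int" where
  "cubic_lead p =
     (if snd (snd p) \<noteq> 0 then snd (snd p) else if fst (snd p) \<noteq> 0 then fst (snd p) else fst p)"

text \<open>The polynomial \<open>n \<mapsto> p (n + m) - p m\<close>.\<close>

definition cubic_shift :: "int \<Rightarrow> cubic \<Rightarrow> cubic" where
  "cubic_shift m p =
     (fst p + 2 * fst (snd p) * m + 3 * snd (snd p) * m ^ 2, fst (snd p) + 3 * snd (snd p) * m,
      snd (snd p))"

definition cubic_bound :: "cubic \<Rightarrow> int \<Rightarrow> int" where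
  "cubic_bound p N = \<bar>fst p\<bar> * N + \<bar>fst (snd p)\<bar> * N ^ 2 + \<bar>snd (snd p)\<bar> * N ^ 3"

lemma cubic_eval_zero [simp]: "cubic_eval 0 n = 0" "cubic_eval p 0 = 0"
  by (simp_all add: cubic_eval_def)

lemma cubic_eval_diff [simp]: "cubic_eval (p - q) n = cubic_eval p n - cubic_eval q n"
  by (simp add: cubic_eval_def algebra_simps)

lemma cubic_eval_shift: "cubic_eval (cubic_shift m p) n = cubic_eval p (n + m) - cubic_eval p m"
  by (simp add: cubic_eval_def cubic_shift_def power2_eq_square power3_eq_cube algebra_simps)

lemma cubic_degree_shift [simp]: "cubic_degree (cubic_shift m p) = cubic_degree p"
  and cubic_lead_shift [simp]: "cubic_lead (cubic_shift m p) = cubic_lead p"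
  by (auto simp: cubic_degree_def cubic_lead_def cubic_shift_def)

lemma cubic_degree_diff_less:
  assumes "cubic_degree q < cubic_degree p"
  shows "cubic_degree (p - q) = cubic_degree p \<and> cubic_lead (p - q) = cubic_lead p"
  using assms by (cases p; cases q) (simp add: cubic_degree_def cubic_lead_def split: if_split_asm)

lemma cubic_degree_diff_eq:
  assumes "cubic_degree q = cubic_degree p" and "q \<noteq> 0"
  shows "cubic_degree (p - q) \<le> cubic_degree p"
    and "cubic_degree (p - q) = cubic_degree p \<Longrightarrow>
           cubic_lead p \<noteq> cubic_lead q \<and> cubic_lead (p - q) = cubic_lead p - cubic_lead q"
  using assms by (cases p; cases q; simp add: cubic_degree_def cubic_lead_def zero_prod_def split: if_split_asm)+

lemma abs_cubic_eval_le:
  assumes "\<bar>n\<bar> \<le> N"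
  shows "\<bar>cubic_eval p n\<bar> \<le> cubic_bound p N"
proof -
  have "\<bar>n\<bar> ^ j \<le> N ^ j" for j using assms by (intro power_mono) auto
  then have "\<bar>u * n ^ j\<bar> \<le> \<bar>u\<bar> * N ^ j" for u :: int and j
    by (simp add: abs_mult mult_left_mono power_abs)
  from this[of _ 1] this[of _ 2] this[of _ 3] show ?thesis
    unfolding cubic_eval_def cubic_bound_def by (smt (verit) power_one_right)
qed

lemma cubic_bound_nonneg: "0 \<le> N \<Longrightarrow> 0 \<le> cubic_bound p N"
  by (simp add: cubic_bound_def)

text \<open>
  The PET step replaces \<open>P\<close> by the polynomials \<open>p (\<cdot> + m) - p m - p\<^sub>1\<close> with \<open>p\<^sub>1 \<in> P\<close> of least degree.
  This removes the leading coefficient of \<open>p\<^sub>1\<close> in its degree and creates no new leading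
  coefficients in higher degrees, so the weight below decreases lexicographically.
\<close>

definition lead_coeffs :: "cubic set \<Rightarrow> nat \<Rightarrow> int set" where
  "lead_coeffs P e = cubic_lead ` {p \<in> P. cubic_degree p = e}"

definition pet_weight :: "cubic set \<Rightarrow> nat \<times> nat \<times> nat" where
  "pet_weight P = (card (lead_coeffs P 3), card (lead_coeffs P 2), card (lead_coeffs P 1))"

definition pet_order :: "(cubic set \<times> cubic set) set" where
  "pet_order = inv_image (less_than <*lex*> less_than <*lex*> less_than) pet_weight"

lemma wf_pet_order: "wf pet_order"
  unfolding pet_order_def by (intro wf_inv_image wf_lex_prod wf_less_than)

lemma lead_coeffs_PET_step_above:
  assumes min: "\<forall>p\<in>P. cubic_degree p1 \<le> cubic_degree p" and p1: "p1 \<noteq> 0"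
    and Q: "\<forall>q\<in>Q. \<exists>p\<in>P. \<exists>m. q = cubic_shift m p - p1"
    and e: "cubic_degree p1 < e"
  shows "lead_coeffs Q e \<subseteq> lead_coeffs P e"
proof
  fix l assume "l \<in> lead_coeffs Q e"
  then obtain q where "q \<in> Q" "cubic_degree q = e" "l = cubic_lead q"
    unfolding lead_coeffs_def by blast
  then obtain p m where p: "p \<in> P" and q: "cubic_degree (cubic_shift m p - p1) = e"
    and l: "l = cubic_lead (cubic_shift m p - p1)"
    using Q by force
  have "cubic_degree p1 \<le> cubic_degree (cubic_shift m p)" using min p by simp
  moreover have "cubic_degree p1 \<noteq> cubic_degree (cubic_shift m p)"
    using cubic_degree_diff_eq(1)[OF _ p1, of "cubic_shift m p"] q e by force
  ultimately have "cubic_degree p1 < cubic_degree (cubic_shift m p)" by simp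
  with cubic_degree_diff_less[OF this] p q l show "l \<in> lead_coeffs P e"
    unfolding lead_coeffs_def by auto
qed

lemma lead_coeffs_PET_step_at:
  assumes min: "\<forall>p\<in>P. cubic_degree p1 \<le> cubic_degree p" and p1: "p1 \<noteq> 0"
    and Q: "\<forall>q\<in>Q. \<exists>p\<in>P. \<exists>m. q = cubic_shift m p - p1"
  shows "lead_coeffs Q (cubic_degree p1) \<subseteq>
           (\<lambda>l. l - cubic_lead p1) ` (lead_coeffs P (cubic_degree p1) - {cubic_lead p1})"
proof
  fix l assume "l \<in> lead_coeffs Q (cubic_degree p1)"
  then obtain q where "q \<in> Q" "cubic_degree q = cubic_degree p1" "l = cubic_lead q"
    unfolding lead_coeffs_def by blast
  then obtain p m where p: "p \<in> P" and q: "cubic_degree (cubic_shift m p - p1) = cubic_degree p1"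
    and l: "l = cubic_lead (cubic_shift m p - p1)"
    using Q by force
  have deg: "cubic_degree p1 = cubic_degree p"
    using min p q cubic_degree_diff_less[of p1 "cubic_shift m p"] by force
  with cubic_degree_diff_eq(2)[of p1 "cubic_shift m p"] p1 q l
  have "cubic_lead p \<noteq> cubic_lead p1" "l = cubic_lead p - cubic_lead p1" by auto
  with p deg show "l \<in> (\<lambda>l. l - cubic_lead p1) ` (lead_coeffs P (cubic_degree p1) - {cubic_lead p1})"
    unfolding lead_coeffs_def by auto
qed

lemma pet_weight_decreases:
  assumes "finite P" "p1 \<in> P" "p1 \<noteq> 0" and min: "\<forall>p\<in>P. cubic_degree p1 \<le> cubic_degree p"
    and Q: "\<forall>q\<in>Q. \<exists>p\<in>P. \<exists>m. q = cubic_shift m p - p1"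
  shows "(Q, P) \<in> pet_order"
proof -
  define d where "d = cubic_degree p1"
  have d: "1 \<le> d" "d \<le> 3"
    using \<open>p1 \<noteq> 0\<close> unfolding d_def cubic_degree_def zero_prod_def
    by (auto simp: prod_eq_iff split: if_splits)
  have fin: "finite (lead_coeffs P e)" for e
    using \<open>finite P\<close> unfolding lead_coeffs_def by simp
  have "card (lead_coeffs Q d) \<le> card (lead_coeffs P d - {cubic_lead p1})"
    using lead_coeffs_PET_step_at[OF min \<open>p1 \<noteq> 0\<close> Q] fin
    by (metis card_image_le card_mono d_def finite_Diff finite_imageI order_trans)
  also have "\<dots> < card (lead_coeffs P d)"
    using \<open>p1 \<in> P\<close> fin by (intro card_Diff1_less) (auto simp: lead_coeffs_def d_def)
  finally have less: "card (lead_coeffs Q d) < card (lead_coeffs P d)" .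
  have le: "card (lead_coeffs Q e) \<le> card (lead_coeffs P e)" if "d < e" for e
    using lead_coeffs_PET_step_above[OF min \<open>p1 \<noteq> 0\<close> Q] that fin unfolding d_def
    by (intro card_mono) auto
  consider "d = 1" | "d = 2" | "d = 3" using d by linarith
  then show ?thesis
    using less le[of 2] le[of 3] unfolding pet_order_def pet_weight_def
    by cases (auto simp: order.order_iff_strict)
qed

text \<open>
  A focused family consists of \<open>k\<close> monochromatic
  configurations \<open>{F + p (n\<^sub>i) | p \<in> P}\<close> with a common focus \<open>F\<close> and pairwise distinct colours;
  for \<open>k = r\<close> one of these colours is \<open>c F\<close>, which makes \<open>F\<close> the base of a monochromatic
  configuration. All witnesses are bounded, uniformly in the colouring.
\<close>

definition mono_config :: "(int \<Rightarrow> nat) \<Rightarrow> cubic set \<Rightarrow> int \<Rightarrow> int \<Rightarrow> bool" where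
  "mono_config c P M N \<longleftrightarrow>
     (\<exists>a n. \<bar>a\<bar> \<le> M \<and> 1 \<le> n \<and> n \<le> N \<and> (\<forall>p\<in>P. c (a + cubic_eval p n) = c a))"

definition focused_configs :: "(int \<Rightarrow> nat) \<Rightarrow> cubic set \<Rightarrow> nat \<Rightarrow> int \<Rightarrow> int \<Rightarrow> bool" where
  "focused_configs c P k M N \<longleftrightarrow>
     (\<exists>F ns col. \<bar>F\<bar> \<le> M \<and> inj_on col {..<k} \<and>
        (\<forall>i<k. 1 \<le> ns i \<and> ns i \<le> N \<and> (\<forall>p\<in>P. c (F + cubic_eval p (ns i)) = col i)))"

definition poly_vdw_bound :: "cubic set \<Rightarrow> nat \<Rightarrow> int \<Rightarrow> bool" where
  "poly_vdw_bound P r N \<longleftrightarrow> (\<forall>c. (\<forall>x. c x < r) \<longrightarrow> mono_config c P N N)"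

definition focusing_bound :: "cubic set \<Rightarrow> nat \<Rightarrow> nat \<Rightarrow> int \<Rightarrow> int \<Rightarrow> bool" where
  "focusing_bound P r k M N \<longleftrightarrow>
     (\<forall>c. (\<forall>x. c x < r) \<longrightarrow> mono_config c P M N \<or> focused_configs c P k M N)"

lemma mono_config_mono:
  "mono_config c P M N \<Longrightarrow> M \<le> M' \<Longrightarrow> N \<le> N' \<Longrightarrow> mono_config c P M' N'"
  unfolding mono_config_def by (meson order_trans)

lemma mono_config_translate:
  assumes "mono_config (\<lambda>y. c (x + y)) P M N"
  shows "mono_config c P (\<bar>x\<bar> + M) N"
proof -
  obtain a n where "\<bar>a\<bar> \<le> M" "1 \<le> n" "n \<le> N" "\<forall>p\<in>P. c (x + (a + cubic_eval p n)) = c (x + a)"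
    using assms unfolding mono_config_def by blast
  then show ?thesis
    unfolding mono_config_def by (intro exI[of _ "x + a"] exI[of _ n]) (auto simp: add.assoc)
qed

lemma poly_vdw_bound_window:
  fixes r :: nat
  assumes "\<forall>R. \<exists>N. poly_vdw_bound Q R N"
  shows "\<exists>N\<ge>0. \<forall>c. (\<forall>y. c y < r) \<longrightarrow> (\<exists>x d. \<bar>x\<bar> \<le> N \<and> 1 \<le> d \<and> d \<le> N \<and>
           (\<forall>q\<in>Q. \<forall>t. \<bar>t\<bar> \<le> W \<longrightarrow> c (x + cubic_eval q d + t) = c (x + t)))"
proof -
  define patterns where "patterns = {xs. set xs \<subseteq> {..<r} \<and> length xs = length [-W..W]}"
  have "finite patterns" unfolding patterns_def by (rule finite_lists_length_eq) simp
  then obtain h where h: "bij_betw h patterns {0..<card patterns}"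
    using ex_bij_betw_finite_nat by blast
  obtain N0 where N0: "poly_vdw_bound Q (card patterns) N0" using assms by blast
  define N where "N = max 0 N0"
  have "\<exists>x d. \<bar>x\<bar> \<le> N \<and> 1 \<le> d \<and> d \<le> N \<and>
          (\<forall>q\<in>Q. \<forall>t. \<bar>t\<bar> \<le> W \<longrightarrow> c (x + cubic_eval q d + t) = c (x + t))"
    if c: "\<forall>y. c y < r" for c
  proof -
    define pattern where "pattern y = map (\<lambda>t. c (y + t)) [-W..W]" for y
    have pattern: "pattern y \<in> patterns" for y unfolding pattern_def patterns_def using c by auto
    have "\<forall>y. h (pattern y) < card patterns" using h pattern unfolding bij_betw_def by auto
    then have "mono_config (\<lambda>y. h (pattern y)) Q N0 N0"
      by (rule N0[unfolded poly_vdw_bound_def, THEN spec, THEN mp])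
    then obtain x d where xd: "\<bar>x\<bar> \<le> N0" "1 \<le> d" "d \<le> N0"
      and mono: "\<forall>q\<in>Q. h (pattern (x + cubic_eval q d)) = h (pattern x)"
      unfolding mono_config_def by blast
    have "pattern (x + cubic_eval q d) = pattern x" if "q \<in> Q" for q
      using mono that h pattern unfolding bij_betw_def inj_on_def by blast
    then have "c (x + cubic_eval q d + t) = c (x + t)" if "q \<in> Q" "\<bar>t\<bar> \<le> W" for q t
      using that unfolding pattern_def map_eq_conv by (auto simp: abs_le_iff)
    with xd show ?thesis unfolding N_def by (intro exI[of _ x] exI[of _ d]) auto
  qed
  then show ?thesis unfolding N_def by (intro exI[of _ N]) (auto simp: N_def)
qed

lemma focused_configs_Suc:
  assumes shift: "\<forall>p\<in>P. \<forall>i<k. c (F' + cubic_eval p (ns i + d)) = c (G + cubic_eval p (ns i))"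
    and shift0: "\<forall>p\<in>P. c (F' + cubic_eval p d) = c G"
    and ns: "\<forall>i<k. 1 \<le> ns i \<and> ns i \<le> N \<and> (\<forall>p\<in>P. c (G + cubic_eval p (ns i)) = col i)"
    and inj: "inj_on col {..<k}" and new: "\<forall>i<k. col i \<noteq> c G"
    and "\<bar>F'\<bar> \<le> M'" "1 \<le> d" "N + d \<le> N'" "0 \<le> N"
  shows "focused_configs c P (Suc k) M' N'"
  unfolding focused_configs_def
proof (intro exI conjI allI impI ballI)
  define ns' where "ns' i = (if i < k then ns i + d else d)" for i
  define col' where "col' = col(k := c G)"
  show "\<bar>F'\<bar> \<le> M'" by fact
  show "inj_on col' {..<Suc k}"
    using inj new unfolding col'_def inj_on_def by (auto simp: less_Suc_eq)
  fix i assume "i < Suc k"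
  then show "1 \<le> ns' i" "ns' i \<le> N'"
    using ns \<open>1 \<le> d\<close> \<open>N + d \<le> N'\<close> \<open>0 \<le> N\<close> unfolding ns'_def by (auto simp: less_Suc_eq)
  fix p assume "p \<in> P"
  with \<open>i < Suc k\<close> shift shift0 ns show "c (F' + cubic_eval p (ns' i)) = col' i"
    unfolding ns'_def col'_def by (auto simp: less_Suc_eq)
qed

lemma refocus_colour_eq:
  assumes "\<forall>t. \<bar>t\<bar> \<le> W \<longrightarrow> c (x + cubic_eval (cubic_shift m p - q) d + t) = c (x + t)"
    and "\<bar>F + cubic_eval p m\<bar> \<le> W"
  shows "c (x + F - cubic_eval q d + cubic_eval p (m + d)) = c (x + F + cubic_eval p m)"
proof -
  have "x + F - cubic_eval q d + cubic_eval p (m + d)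
      = x + cubic_eval (cubic_shift m p - q) d + (F + cubic_eval p m)"
    using cubic_eval_shift[of m p d] by (simp add: algebra_simps)
  then have "c (x + F - cubic_eval q d + cubic_eval p (m + d))
      = c (x + cubic_eval (cubic_shift m p - q) d + (F + cubic_eval p m))" by (rule arg_cong)
  also have "\<dots> = c (x + (F + cubic_eval p m))" using assms by blast
  finally show ?thesis by (simp only: add.assoc)
qed

text \<open>
  If the colouring seen from \<open>x\<close> has \<open>k\<close> focused configurations at \<open>F\<close>, refocusing at
  \<open>x + F - e\<close> moves them from \<open>n\<^sub>i\<close> to \<open>n\<^sub>i + d\<close> and adds one with \<open>n = d\<close> in colour \<open>c (x + F)\<close>,
  unless that colour already occurs, in which case \<open>x + F\<close> is the base of a monochromatic
  configuration.
\<close>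

lemma mono_config_or_focused_Suc:
  assumes focus: "mono_config (\<lambda>y. c (x + y)) P M N \<or> focused_configs (\<lambda>y. c (x + y)) P k M N"
    and refocus: "\<And>F p m. \<bar>F\<bar> \<le> M \<Longrightarrow> p \<in> P \<Longrightarrow> 0 \<le> m \<Longrightarrow> m \<le> N \<Longrightarrow>
      c (x + F - e + cubic_eval p (m + d)) = c (x + F + cubic_eval p m)"
    and M': "\<bar>x\<bar> + M + \<bar>e\<bar> \<le> M'" and N': "N + d \<le> N'" and "1 \<le> d" "0 \<le> N"
  shows "mono_config c P M' N' \<or> focused_configs c P (Suc k) M' N'"
  using focus
proof
  assume "mono_config (\<lambda>y. c (x + y)) P M N"
  then have "mono_config c P (\<bar>x\<bar> + M) N" by (rule mono_config_translate)
  then have "mono_config c P M' N'" by (rule mono_config_mono) (use M' N' \<open>1 \<le> d\<close> in auto)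
  then show ?thesis ..
next
  assume "focused_configs (\<lambda>y. c (x + y)) P k M N"
  then obtain F ns col where F: "\<bar>F\<bar> \<le> M" and inj: "inj_on col {..<k}"
    and ns: "\<forall>i<k. 1 \<le> ns i \<and> ns i \<le> N \<and> (\<forall>p\<in>P. c (x + F + cubic_eval p (ns i)) = col i)"
    unfolding focused_configs_def by (auto simp: add.assoc)
  show ?thesis
  proof (cases "\<exists>i<k. col i = c (x + F)")
    case True
    then obtain i where "i < k" "col i = c (x + F)" by blast
    moreover have "\<bar>x + F\<bar> \<le> M'" using F M' by arith
    ultimately have "mono_config c P M' N'"
      using ns N' \<open>1 \<le> d\<close> unfolding mono_config_def
      by (intro exI[of _ "x + F"] exI[of _ "ns i"]) auto
    then show ?thesis ..
  next
    case False
    have "focused_configs c P (Suc k) M' N'"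
    proof (rule focused_configs_Suc[where G = "x + F" and F' = "x + F - e"])
      show "\<forall>p\<in>P. \<forall>i<k. c (x + F - e + cubic_eval p (ns i + d)) = c (x + F + cubic_eval p (ns i))"
        using refocus[OF F] ns by auto
      show "\<forall>p\<in>P. c (x + F - e + cubic_eval p d) = c (x + F)"
        using refocus[OF F, of _ 0] \<open>0 \<le> N\<close> by simp
      show "\<bar>x + F - e\<bar> \<le> M'" using F M' by arith
    qed (use ns inj False N' \<open>1 \<le> d\<close> \<open>0 \<le> N\<close> in auto)
    then show ?thesis ..
  qed
qed

lemma focusing_bound_Suc:
  assumes "finite P" and p1: "p1 \<in> P" "p1 \<noteq> 0" and min: "\<forall>p\<in>P. cubic_degree p1 \<le> cubic_degree p"
    and IH: "\<And>Q. (Q, P) \<in> pet_order \<Longrightarrow> finite Q \<Longrightarrow> 0 \<notin> Q \<Longrightarrow> \<forall>R. \<exists>N. poly_vdw_bound Q R N"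
    and focus: "focusing_bound P r k M N" and "0 \<le> M" "0 \<le> N"
  shows "\<exists>M' N'. 0 \<le> M' \<and> 0 \<le> N' \<and> focusing_bound P r (Suc k) M' N'"
proof -
  define W where "W = M + (\<Sum>p\<in>P. cubic_bound p N)"
  have W: "\<bar>F + cubic_eval p m\<bar> \<le> W" if "\<bar>F\<bar> \<le> M" "p \<in> P" "0 \<le> m" "m \<le> N" for F p m
  proof -
    have "\<bar>cubic_eval p m\<bar> \<le> cubic_bound p N" using that by (intro abs_cubic_eval_le) auto
    also have "\<dots> \<le> (\<Sum>p\<in>P. cubic_bound p N)"
      using \<open>finite P\<close> that cubic_bound_nonneg[OF \<open>0 \<le> N\<close>] by (intro member_le_sum) auto
    finally show ?thesis using that unfolding W_def by linarith
  qed
  define Q where "Q = (\<lambda>(m, p). cubic_shift m p - p1) ` ({0..N} \<times> P) - {0}"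
  have "finite Q" using \<open>finite P\<close> unfolding Q_def by simp
  moreover have "(Q, P) \<in> pet_order"
    by (rule pet_weight_decreases[OF \<open>finite P\<close> p1 min]) (auto simp: Q_def)
  ultimately obtain NQ where "0 \<le> NQ" and NQ: "\<forall>c. (\<forall>y. c y < r) \<longrightarrow> (\<exists>x d. \<bar>x\<bar> \<le> NQ \<and>
      1 \<le> d \<and> d \<le> NQ \<and> (\<forall>q\<in>Q. \<forall>t. \<bar>t\<bar> \<le> W \<longrightarrow> c (x + cubic_eval q d + t) = c (x + t)))"
    using poly_vdw_bound_window[OF IH] unfolding Q_def by blast
  define M' where "M' = NQ + M + cubic_bound p1 NQ"
  define N' where "N' = N + NQ"
  have "mono_config c P M' N' \<or> focused_configs c P (Suc k) M' N'" if c: "\<forall>y. c y < r" for c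
  proof -
    obtain x d where xd: "\<bar>x\<bar> \<le> NQ" "1 \<le> d" "d \<le> NQ"
      and rec: "\<forall>q\<in>Q. \<forall>t. \<bar>t\<bar> \<le> W \<longrightarrow> c (x + cubic_eval q d + t) = c (x + t)"
      using NQ c by blast
    have focus_x: "mono_config (\<lambda>y. c (x + y)) P M N \<or> focused_configs (\<lambda>y. c (x + y)) P k M N"
      using c by (intro focus[unfolded focusing_bound_def, THEN spec, THEN mp]) blast
    have refocus: "c (x + F - cubic_eval p1 d + cubic_eval p (m + d)) = c (x + F + cubic_eval p m)"
      if "\<bar>F\<bar> \<le> M" "p \<in> P" "0 \<le> m" "m \<le> N" for F p m
    proof (rule refocus_colour_eq[OF _ W[OF that]])
      show "\<forall>t. \<bar>t\<bar> \<le> W \<longrightarrow> c (x + cubic_eval (cubic_shift m p - p1) d + t) = c (x + t)"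
      proof (cases "cubic_shift m p - p1 = 0")
        case False
        then have "cubic_shift m p - p1 \<in> Q"
          using that unfolding Q_def by (auto intro!: rev_image_eqI[of "(m, p)"])
        with rec show ?thesis by blast
      qed simp
    qed
    have "\<bar>cubic_eval p1 d\<bar> \<le> cubic_bound p1 NQ" using xd by (intro abs_cubic_eval_le) auto
    then have "\<bar>x\<bar> + M + \<bar>cubic_eval p1 d\<bar> \<le> M'" "N + d \<le> N'"
      using xd unfolding M'_def N'_def by linarith+
    from mono_config_or_focused_Suc[OF focus_x refocus this xd(2) \<open>0 \<le> N\<close>] show ?thesis .
  qed
  moreover have "0 \<le> M'" "0 \<le> N'"
    using \<open>0 \<le> M\<close> \<open>0 \<le> N\<close> \<open>0 \<le> NQ\<close> cubic_bound_nonneg[OF \<open>0 \<le> NQ\<close>] unfolding M'_def N'_def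
    by auto
  ultimately show ?thesis unfolding focusing_bound_def by blast
qed

lemma poly_vdw_bound_if_focusing:
  assumes "P \<noteq> {}" and "focusing_bound P r r M N"
  shows "poly_vdw_bound P r (max M N)"
  unfolding poly_vdw_bound_def
proof (intro allI impI)
  fix c :: "int \<Rightarrow> nat" assume c: "\<forall>x. c x < r"
  then have "mono_config c P M N \<or> focused_configs c P r M N"
    using assms(2) unfolding focusing_bound_def by simp
  then show "mono_config c P (max M N) (max M N)"
  proof
    assume "focused_configs c P r M N"
    then obtain F ns col where F: "\<bar>F\<bar> \<le> M" and inj: "inj_on col {..<r}"
      and ns: "\<forall>i<r. 1 \<le> ns i \<and> ns i \<le> N \<and> (\<forall>p\<in>P. c (F + cubic_eval p (ns i)) = col i)"
      unfolding focused_configs_def by blast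
    \<comment> \<open>the \<open>r\<close> distinct colours exhaust \<open>{..<r}\<close>, so one of them is \<open>c F\<close>\<close>
    obtain p where p: "p \<in> P" using \<open>P \<noteq> {}\<close> by blast
    have "col i < r" if "i < r" for i
    proof -
      from ns that have "\<forall>q\<in>P. c (F + cubic_eval q (ns i)) = col i" by simp
      with p c show ?thesis by metis
    qed
    then have "col ` {..<r} = {..<r}"
      by (intro card_subset_eq) (auto simp: card_image[OF inj])
    then have "c F \<in> col ` {..<r}" using c by simp
    then obtain i where "i < r" "col i = c F" by auto
    with F ns show ?thesis
      unfolding mono_config_def by (intro exI[of _ F] exI[of _ "ns i"]) auto
  next
    assume "mono_config c P M N"
    then show ?thesis by (rule mono_config_mono) auto
  qed
qed

theorem polynomial_van_der_Waerden:
  assumes "finite P" "0 \<notin> P"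
  shows "\<exists>N. poly_vdw_bound P r N"
  using assms
proof (induction P arbitrary: r rule: wf_induct_rule[OF wf_pet_order])
  case (1 P)
  show ?case
  proof (cases "P = {}")
    case True
    then show ?thesis unfolding poly_vdw_bound_def mono_config_def
      by (intro exI[of _ 1] allI impI exI[of _ 0]) auto
  next
    case False
    then obtain p1 where p1: "p1 \<in> P" "\<forall>p\<in>P. cubic_degree p1 \<le> cubic_degree p"
      using ex_has_least_nat[of "\<lambda>p. p \<in> P" _ cubic_degree] by blast
    have "p1 \<noteq> 0" using p1(1) \<open>0 \<notin> P\<close> by blast
    have IH: "\<forall>R. \<exists>N. poly_vdw_bound Q R N" if "(Q, P) \<in> pet_order" "finite Q" "0 \<notin> Q" for Q
      using "1.IH" that by blast
    have "\<exists>M N. 0 \<le> M \<and> 0 \<le> N \<and> focusing_bound P r k M N" for k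
    proof (induction k)
      case 0
      show ?case unfolding focusing_bound_def focused_configs_def by auto
    next
      case (Suc k)
      then obtain M N where "0 \<le> M" "0 \<le> N" "focusing_bound P r k M N" by blast
      then show ?case
        using focusing_bound_Suc[OF \<open>finite P\<close> p1(1) \<open>p1 \<noteq> 0\<close> p1(2) IH] by blast
    qed
    then obtain M N where "focusing_bound P r r M N" by blast
    with poly_vdw_bound_if_focusing[OF False] show ?thesis by blast
  qed
qed

corollary cube_recurrence:
  fixes c :: "int \<Rightarrow> 'a"
  assumes "finite (range c)"
  shows "\<exists>a n. 0 < n \<and> c (a + n ^ 3) = c a"
proof -
  obtain g where g: "bij_betw g (range c) {0..<card (range c)}"
    using ex_bij_betw_finite_nat[OF assms] by blast
  have "(0, 0, 1) \<noteq> (0 :: cubic)" by (simp add: zero_prod_def)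
  then obtain N where N: "poly_vdw_bound {(0, 0, 1)} (card (range c)) N"
    using polynomial_van_der_Waerden[of "{(0, 0, 1)}"] by auto
  have "\<forall>x. (g \<circ> c) x < card (range c)" using g unfolding bij_betw_def by auto
  then have "mono_config (g \<circ> c) {(0, 0, 1)} N N"
    by (rule N[unfolded poly_vdw_bound_def, THEN spec, THEN mp])
  then obtain a n where "1 \<le> n" "g (c (a + n ^ 3)) = g (c a)"
    unfolding mono_config_def cubic_eval_def by auto
  moreover have "inj_on g (range c)" using g by (simp add: bij_betw_def)
  ultimately show ?thesis by (intro exI[of _ a] exI[of _ n]) (auto dest: inj_onD)
qed

section \<open>Sets of integers with pairwise cube differences\<close>

definition is_cube :: "int \<Rightarrow> bool" where
  "is_cube v \<longleftrightarrow> (\<exists>w. v = w ^ 3)"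

lemma is_cube_uminus [simp]: "is_cube (- v) \<longleftrightarrow> is_cube v"
proof -
  have "(- w) ^ 3 = - (w ^ 3)" for w :: int by (simp add: power3_eq_cube)
  then show ?thesis unfolding is_cube_def by (metis minus_minus)
qed

lemma is_cube_diff_commute: "is_cube (u - v) \<longleftrightarrow> is_cube (v - u)"
  by (metis is_cube_uminus minus_diff_eq)

lemma is_cube_pos_root:
  assumes "is_cube v" "0 < v"
  obtains w where "0 < w" "v = w ^ 3"
  using assms unfolding is_cube_def by (auto simp: zero_less_power_eq)

lemma cube_sum_root_le:
  fixes x x1 y :: int
  assumes "0 < x1" "0 < y" "0 < x" "x ^ 3 = x1 ^ 3 + y ^ 3"
  shows "x \<le> x1 ^ 3"
proof -
  have "y ^ 3 < x ^ 3" using assms by (simp add: power3_eq_cube)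
  then have "y < x" using assms(3) by (meson power_less_imp_less_base order_less_imp_le)
  then have "y \<le> x - 1" by simp
  then have "y ^ 3 \<le> (x - 1) ^ 3" using assms(2) by (intro power_mono) auto
  moreover have "(x - 1) ^ 3 = x ^ 3 - 3 * x ^ 2 + 3 * x - 1"
    by (simp add: power3_eq_cube power2_eq_square algebra_simps)
  ultimately have "3 * x ^ 2 - 3 * x + 1 \<le> x1 ^ 3" using assms(4) by linarith
  moreover have "0 \<le> (3 * x - 1) * (x - 1)" using assms(3) by (intro mult_nonneg_nonneg) auto
  then have "x \<le> 3 * x ^ 2 - 3 * x + 1" by (simp add: power2_eq_square algebra_simps)
  ultimately show ?thesis by linarith
qed

lemma finite_if_cube_differences_above:
  assumes above: "\<forall>d\<in>D. e < d \<and> is_cube (d - e)"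
    and pairwise: "\<forall>u\<in>D. \<forall>v\<in>D. u \<noteq> v \<longrightarrow> is_cube (u - v)"
  shows "finite D"
proof (cases "D = {}")
  case False
  then obtain d1 where d1: "d1 \<in> D" by blast
  have "is_cube (d1 - e)" "0 < d1 - e" using above d1 by auto
  then obtain x1 where x1: "0 < x1" "d1 - e = x1 ^ 3" by (rule is_cube_pos_root)
  have "d - e \<le> (d1 - e) ^ 3" if d: "d \<in> D" for d
  proof (cases "d \<le> d1")
    case True
    have "1 \<le> x1 ^ 3" using x1 by simp
    then have "d1 - e \<le> (d1 - e) ^ 3" using x1 by (intro self_le_power) auto
    with True show ?thesis by linarith
  next
    case False
    have "is_cube (d - e)" "0 < d - e" using above d by auto
    then obtain x where x: "0 < x" "d - e = x ^ 3" by (rule is_cube_pos_root)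
    have "is_cube (d - d1)" "0 < d - d1" using pairwise d d1 False by auto
    then obtain y where y: "0 < y" "d - d1 = y ^ 3" by (rule is_cube_pos_root)
    have "x ^ 3 = x1 ^ 3 + y ^ 3" using x y x1 by linarith
    then have "x \<le> x1 ^ 3" by (rule cube_sum_root_le[OF x1(1) y(1) x(1)])
    then have "x ^ 3 \<le> (x1 ^ 3) ^ 3" using x by (intro power_mono) auto
    then show ?thesis using x x1 by simp
  qed
  then have "D \<subseteq> {e <.. e + (d1 - e) ^ 3}" using above by force
  then show ?thesis by (rule finite_subset) simp
qed simp

lemma finite_if_cube_differences:
  fixes D :: "int set"
  assumes pairwise: "\<forall>u\<in>D. \<forall>v\<in>D. u \<noteq> v \<longrightarrow> is_cube (u - v)"
  shows "finite D"
proof (cases "D = {}")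
  case False
  then obtain e where e: "e \<in> D" by blast
  have "finite {d \<in> D. e < d}"
    using pairwise e by (intro finite_if_cube_differences_above[of _ e]) auto
  moreover have "finite (uminus ` {d \<in> D. d < e})"
    using pairwise e by (intro finite_if_cube_differences_above[of _ "- e"]) (auto simp: is_cube_diff_commute)
  then have "finite {d \<in> D. d < e}" by (rule finite_imageD) (simp add: inj_on_def)
  moreover have "D \<subseteq> {d \<in> D. e < d} \<union> {d \<in> D. d < e} \<union> {e}" by auto
  ultimately show ?thesis by (meson finite.emptyI finite.insertI finite_UnI finite_subset)
qed simp

section \<open>Symmetric differences and cube pairs\<close>

definition cube_pairs :: "int set set" where
  "cube_pairs = {{x, y} | x y. x - y \<noteq> 0 \<and> (\<exists>z::int. x - y = z ^ 3)}"

lemma sym_diff_sym_diff_left: "sym_diff A (sym_diff A B) = B"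
  by auto

lemma sym_diff_cancel_left: "sym_diff (sym_diff A B) (sym_diff A C) = sym_diff B C"
  by auto

lemma cube_pairs_iff: "S \<in> cube_pairs \<longleftrightarrow> (\<exists>x y. S = {x, y} \<and> x \<noteq> y \<and> is_cube (x - y))"
  unfolding cube_pairs_def is_cube_def by auto

lemma card_cube_pair: "S \<in> cube_pairs \<Longrightarrow> card S = 2"
  unfolding cube_pairs_iff by auto

lemma finite_cube_pair: "S \<in> cube_pairs \<Longrightarrow> finite S"
  unfolding cube_pairs_iff by auto

lemma cube_pair_cube_diff:
  assumes "{u, v} \<in> cube_pairs" "u \<noteq> v"
  shows "is_cube (u - v)"
proof -
  obtain x y where xy: "{u, v} = {x, y}" "is_cube (x - y)"
    using assms(1) unfolding cube_pairs_iff by blast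
  then have "u - v = x - y \<or> u - v = - (x - y)" by (auto simp: doubleton_eq_iff)
  with xy(2) show ?thesis by (metis is_cube_uminus)
qed

lemma cube_pair_through:
  assumes "S \<in> cube_pairs" "e \<in> S"
  obtains c where "c \<noteq> e" "S = {e, c}" "is_cube (e - c)"
proof -
  obtain x y where "S = {x, y}" "x \<noteq> y" using assms(1) unfolding cube_pairs_iff by blast
  define c where "c = (if e = x then y else x)"
  have "c \<noteq> e" "S = {e, c}" using \<open>S = {x, y}\<close> \<open>x \<noteq> y\<close> assms(2) by (auto simp: c_def)
  moreover have "is_cube (e - c)"
    using assms(1) calculation cube_pair_cube_diff by metis
  ultimately show ?thesis by (rule that)
qed

lemma doubletons_meet_if_card_sym_diff:
  assumes "a \<noteq> b" "c \<noteq> e" "card (sym_diff {a, b} {c, e}) = 2"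
  shows "{a, b} \<inter> {c, e} \<noteq> {}"
proof
  assume "{a, b} \<inter> {c, e} = {}"
  then have "sym_diff {a, b} {c, e} = {a, b, c, e}" "card {a, b, c, e} = 4"
    using assms(1,2) by auto
  with assms(3) show False by simp
qed

lemma cube_differences_in_star:
  assumes "\<S> \<subseteq> cube_pairs" "\<forall>S\<in>\<S>. e \<in> S"
    and closed: "\<forall>S\<in>\<S>. \<forall>T\<in>\<S>. S \<noteq> T \<longrightarrow> sym_diff S T \<in> cube_pairs"
  shows "\<forall>u\<in>\<Union>\<S>. \<forall>v\<in>\<Union>\<S>. u \<noteq> v \<longrightarrow> is_cube (u - v)"
proof (intro ballI impI)
  fix u v assume "u \<in> \<Union>\<S>" "v \<in> \<Union>\<S>" "u \<noteq> v"
  then obtain S T where S: "S \<in> \<S>" "u \<in> S" and T: "T \<in> \<S>" "v \<in> T" by blast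
  obtain cS where cS: "cS \<noteq> e" "S = {e, cS}" "is_cube (e - cS)"
    using assms(1,2) S cube_pair_through by blast
  obtain cT where cT: "cT \<noteq> e" "T = {e, cT}" "is_cube (e - cT)"
    using assms(1,2) T cube_pair_through by blast
  consider "u = e" | "v = e" | "u = cS" "v = cT"
    using S T cS cT by blast
  then show "is_cube (u - v)"
  proof cases
    case 3
    then have "S \<noteq> T" using \<open>u \<noteq> v\<close> cS cT by (auto simp: doubleton_eq_iff)
    moreover have "sym_diff S T = {u, v}"
      using 3 cS cT \<open>u \<noteq> v\<close> by auto
    ultimately show ?thesis using closed S T \<open>u \<noteq> v\<close> by (metis cube_pair_cube_diff)
  qed (use \<open>u \<noteq> v\<close> S T cS cT in \<open>auto simp: is_cube_diff_commute\<close>)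
qed

lemma cube_pairs_not_sym_diff_closed:
  assumes "infinite \<P>" "\<P> \<subseteq> cube_pairs"
    and closed: "\<forall>S\<in>\<P>. \<forall>T\<in>\<P>. S \<noteq> T \<longrightarrow> sym_diff S T \<in> cube_pairs"
  shows False
proof -
  have "\<P> \<noteq> {}" using \<open>infinite \<P>\<close> by auto
  then obtain S0 where "S0 \<in> \<P>" by blast
  then have "S0 \<in> cube_pairs" using \<open>\<P> \<subseteq> cube_pairs\<close> by blast
  then obtain a b where S0: "S0 = {a, b}" "a \<noteq> b" unfolding cube_pairs_iff by blast
  have "S \<in> {S \<in> \<P>. a \<in> S} \<union> {S \<in> \<P>. b \<in> S}" if "S \<in> \<P> - {S0}" for S
  proof -
    have "S \<in> cube_pairs" using that \<open>\<P> \<subseteq> cube_pairs\<close> by blast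
    then obtain c e where S: "S = {c, e}" "c \<noteq> e" unfolding cube_pairs_iff by blast
    have "sym_diff S0 S \<in> cube_pairs" using that closed \<open>S0 \<in> \<P>\<close> by blast
    then have "card (sym_diff {a, b} {c, e}) = 2" unfolding S0(1) S(1) by (rule card_cube_pair)
    then have "{a, b} \<inter> {c, e} \<noteq> {}" by (rule doubletons_meet_if_card_sym_diff[OF \<open>a \<noteq> b\<close> S(2)])
    then show ?thesis using that S(1) by auto
  qed
  then have "\<P> \<subseteq> insert S0 ({S \<in> \<P>. a \<in> S} \<union> {S \<in> \<P>. b \<in> S})" by blast
  then have "infinite ({S \<in> \<P>. a \<in> S} \<union> {S \<in> \<P>. b \<in> S})"
    using \<open>infinite \<P>\<close> finite_subset by auto
  then have "infinite {S \<in> \<P>. a \<in> S} \<or> infinite {S \<in> \<P>. b \<in> S}" by simp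
  then obtain e where star: "infinite {S \<in> \<P>. e \<in> S}" by blast
  have "finite (\<Union>{S \<in> \<P>. e \<in> S})"
    using \<open>\<P> \<subseteq> cube_pairs\<close> closed
    by (intro finite_if_cube_differences cube_differences_in_star) auto
  moreover have "\<forall>S \<in> {S \<in> \<P>. e \<in> S}. finite S"
    using \<open>\<P> \<subseteq> cube_pairs\<close> finite_cube_pair by blast
  ultimately show False using star by (simp add: finite_UnionD)
qed

lemma inj_sym_diff: "inj (sym_diff A)"
  unfolding inj_def set_eq_iff by blast

lemma infinite_family_sym_diff_notin_cube_pairs:
  assumes "infinite Z"
  shows "\<exists>y\<in>Z. \<exists>z\<in>Z. y \<noteq> z \<and> sym_diff y z \<notin> cube_pairs"
proof (rule ccontr)
  assume "\<not> ?thesis"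
  then have closed: "\<forall>y\<in>Z. \<forall>z\<in>Z. y \<noteq> z \<longrightarrow> sym_diff y z \<in> cube_pairs" by blast
  have "Z \<noteq> {}" using assms by auto
  then obtain y0 where "y0 \<in> Z" by blast
  show False
  proof (rule cube_pairs_not_sym_diff_closed)
    show "infinite (sym_diff y0 ` (Z - {y0}))"
    proof
      assume "finite (sym_diff y0 ` (Z - {y0}))"
      then have "finite (Z - {y0})" using inj_sym_diff by (rule finite_imageD[OF _ inj_on_subset]) simp
      with assms show False by simp
    qed
    show "sym_diff y0 ` (Z - {y0}) \<subseteq> cube_pairs"
      using closed \<open>y0 \<in> Z\<close> by auto
    show "\<forall>S\<in>sym_diff y0 ` (Z - {y0}). \<forall>T\<in>sym_diff y0 ` (Z - {y0}). S \<noteq> T \<longrightarrow>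
        sym_diff S T \<in> cube_pairs"
    proof (intro ballI impI)
      fix S T assume "S \<in> sym_diff y0 ` (Z - {y0})" "T \<in> sym_diff y0 ` (Z - {y0})" "S \<noteq> T"
      then obtain z w where "z \<in> Z" "w \<in> Z" "S = sym_diff y0 z" "T = sym_diff y0 w" "z \<noteq> w"
        by blast
      moreover from this have "sym_diff S T = sym_diff z w" by blast
      ultimately show "sym_diff S T \<in> cube_pairs" using closed by simp
    qed
  qed
qed

lemma card_sym_diff_ge_2_among_three:
  fixes y z w :: "'a set"
  assumes "y \<noteq> z" "y \<noteq> w" "z \<noteq> w" "finite y" "finite z" "finite w"
  shows "\<exists>u\<in>{y, z, w}. \<exists>v\<in>{y, z, w}. u \<noteq> v \<and> 2 \<le> card (sym_diff u v)"
proof (rule ccontr)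
  assume neg: "\<not> ?thesis"
  have "card (sym_diff y u) = 1" if "u \<in> {z, w}" for u
  proof -
    have "card (sym_diff y u) \<le> 1" using neg assms that by auto
    moreover have "0 < card (sym_diff y u)" using assms that by (auto simp: card_gt_0_iff)
    ultimately show ?thesis by linarith
  qed
  then obtain \<alpha> \<beta> where "sym_diff y z = {\<alpha>}" "sym_diff y w = {\<beta>}"
    by (metis card_1_singletonE insertCI)
  then have z: "z = sym_diff y {\<alpha>}" and w: "w = sym_diff y {\<beta>}"
    by (metis sym_diff_sym_diff_left)+
  with \<open>z \<noteq> w\<close> have "\<alpha> \<noteq> \<beta>" by blast
  have "sym_diff z w = {\<alpha>, \<beta>}"
    unfolding z w sym_diff_cancel_left using \<open>\<alpha> \<noteq> \<beta>\<close> by auto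
  then have "2 \<le> card (sym_diff z w)" using \<open>\<alpha> \<noteq> \<beta>\<close> by simp
  with \<open>z \<noteq> w\<close> neg show False by blast
qed

lemma finite_sym_diff_sym_diff_notin_cube_pairs:
  assumes "finite T" "infinite Z" "\<forall>s\<in>Z. finite s"
  shows "\<exists>y\<in>Z. \<exists>z\<in>Z. y \<noteq> z \<and> sym_diff T (sym_diff y z) \<notin> cube_pairs"
proof (cases "T = {}")
  case True
  then show ?thesis using infinite_family_sym_diff_notin_cube_pairs[OF \<open>infinite Z\<close>] by simp
next
  case False
  have "(\<lambda>s. s \<inter> T) ` Z \<subseteq> Pow T" by auto
  then have "finite ((\<lambda>s. s \<inter> T) ` Z)" by (rule finite_subset) (simp add: \<open>finite T\<close>)
  then obtain s0 where "infinite {s \<in> Z. s \<inter> T = s0 \<inter> T}"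
    using pigeonhole_infinite[OF \<open>infinite Z\<close>] by blast
  then obtain Z3 where Z3: "Z3 \<subseteq> {s \<in> Z. s \<inter> T = s0 \<inter> T}" "card Z3 = 3" "finite Z3"
    by (meson infinite_arbitrarily_large)
  then obtain y z w where "Z3 = {y, z, w}" "y \<noteq> z" "y \<noteq> w" "z \<noteq> w"
    by (metis card_3_iff)
  moreover have "finite y" "finite z" "finite w" using calculation Z3(1) assms(3) by auto
  ultimately obtain u v where uv: "u \<in> Z3" "v \<in> Z3" "u \<noteq> v" "2 \<le> card (sym_diff u v)"
    using card_sym_diff_ge_2_among_three by metis
  then have "u \<in> Z" "v \<in> Z" "u \<inter> T = v \<inter> T" using Z3 by auto
  then have disj: "T \<inter> sym_diff u v = {}" by auto
  then have "sym_diff T (sym_diff u v) = T \<union> sym_diff u v" by auto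
  moreover have "finite (sym_diff u v)" using \<open>u \<in> Z\<close> \<open>v \<in> Z\<close> assms(3) by simp
  moreover have "card T \<ge> 1" using False \<open>finite T\<close> by (simp add: Suc_le_eq card_gt_0_iff)
  ultimately have "card (sym_diff T (sym_diff u v)) \<ge> 3"
    using uv(4) disj \<open>finite T\<close> by (simp add: card_Un_disjoint)
  then have "sym_diff T (sym_diff u v) \<notin> cube_pairs" using card_cube_pair by fastforce
  with \<open>u \<in> Z\<close> \<open>v \<in> Z\<close> \<open>u \<noteq> v\<close> show ?thesis by blast
qed

section \<open>The Boolean group of finite sets of integers\<close>

lemma BoolZ_carrier: "carrier BoolZ = {S. finite S}"
  and BoolZ_mult: "x \<otimes>\<^bsub>BoolZ\<^esub> y = sym_diff x y"
  and BoolZ_one: "\<one>\<^bsub>BoolZ\<^esub> = {}"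
  by (simp_all add: BoolZ_def)

lemma group_BoolZ: "group BoolZ"
  by (rule groupI) (auto simp: BoolZ_def)

lemma inv_BoolZ: "finite x \<Longrightarrow> inv\<^bsub>BoolZ\<^esub> x = x"
  by (rule group.inv_equality[OF group_BoolZ]) (auto simp: BoolZ_def)

lemma nat_pow_BoolZ: "x [^]\<^bsub>BoolZ\<^esub> (n::nat) = (if even n then {} else x)"
  by (induction n) (auto simp: BoolZ_one BoolZ_mult)

lemma int_pow_BoolZ_odd:
  assumes "finite x" "odd (m::int)"
  shows "x [^]\<^bsub>BoolZ\<^esub> m = x"
proof (cases "m < 0")
  case True
  then have "odd (nat (- m))" using assms(2) by (simp add: even_nat_iff)
  with True show ?thesis using assms by (simp add: int_pow_def2 nat_pow_BoolZ inv_BoolZ)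
next
  case False
  then have "odd (nat m)" using assms(2) by (simp add: even_nat_iff)
  with False show ?thesis by (simp add: int_pow_def2 nat_pow_BoolZ)
qed

text \<open>The product \<open>s\<^sub>1 \<Delta> \<cdots> \<Delta> s\<^sub>k\<close> of a finite family of sets.\<close>

definition odd_cover :: "'a set set \<Rightarrow> 'a set" where
  "odd_cover S = {w. odd (card {s \<in> S. w \<in> s})}"

lemma odd_cover_insert:
  assumes "finite S" "y \<notin> S"
  shows "odd_cover (insert y S) = sym_diff y (odd_cover S)"
proof -
  have "{s \<in> insert y S. w \<in> s} = (if w \<in> y then insert y {s \<in> S. w \<in> s} else {s \<in> S. w \<in> s})" for w
    by auto
  then show ?thesis using assms by (auto simp: odd_cover_def)
qed

lemma finite_odd_cover:
  assumes "finite S" "\<forall>s\<in>S. finite s"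
  shows "finite (odd_cover S)"
proof -
  have "odd_cover S \<subseteq> \<Union>S"
  proof
    fix w assume "w \<in> odd_cover S"
    then have "{s \<in> S. w \<in> s} \<noteq> {}" unfolding odd_cover_def by (metis (no_types) card.empty even_zero mem_Collect_eq)
    then show "w \<in> \<Union>S" by auto
  qed
  then show ?thesis using assms by (meson finite_Union finite_subset)
qed

lemma foldr_sym_diff:
  "foldr (\<lambda>i acc. sym_diff (g i) acc) xs {} = {w. odd (length (filter (\<lambda>i. w \<in> g i) xs))}"
  by (induction xs) auto

lemma perm_power_prod_BoolZ:
  assumes "\<forall>i<length ms. finite (x (\<sigma> i)) \<and> odd (ms ! i)"
  shows "perm_power_prod BoolZ ms x \<sigma> = {w. odd (card {i. i < length ms \<and> w \<in> x (\<sigma> i)})}"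
proof -
  have "perm_power_prod BoolZ ms x \<sigma> = foldr (\<lambda>i acc. sym_diff (x (\<sigma> i)) acc) [0..<length ms] {}"
    unfolding perm_power_prod_def BoolZ_one
    by (rule foldr_cong) (use assms in \<open>auto simp: int_pow_BoolZ_odd BoolZ_mult\<close>)
  also have "\<dots> = {w. odd (card {i. i < length ms \<and> w \<in> x (\<sigma> i)})}"
    unfolding foldr_sym_diff length_filter_conv_card by (simp cong: conj_cong)
  finally show ?thesis .
qed

lemma card_permuted_members:
  assumes x: "bij_betw x {..<k} S" and \<sigma>: "\<sigma> permutes {..<k}"
  shows "card {i. i < k \<and> w \<in> x (\<sigma> i)} = card {s \<in> S. w \<in> s}"
proof -
  have "bij_betw (x \<circ> \<sigma>) {..<k} S" using bij_betw_trans[OF permutes_imp_bij[OF \<sigma>] x] .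
  then have "bij_betw (x \<circ> \<sigma>) {i \<in> {..<k}. w \<in> (x \<circ> \<sigma>) i} {s \<in> S. w \<in> s}"
    by (rule bij_betw_Collect) simp
  then show ?thesis by (simp add: bij_betw_same_card)
qed

lemma perm_power_prod_BoolZ_eq_odd_cover:
  assumes x: "bij_betw x {..<length ms} S" and \<sigma>: "\<sigma> permutes {..<length ms}"
    and "\<forall>s\<in>S. finite s" "\<forall>m\<in>set ms. odd m"
  shows "perm_power_prod BoolZ ms x \<sigma> = odd_cover S"
proof -
  have "\<sigma> i \<in> {..<length ms}" if "i < length ms" for i
    using \<sigma> that by (metis lessThan_iff permutes_in_image)
  then have "\<forall>i<length ms. finite (x (\<sigma> i)) \<and> odd (ms ! i)"
    using assms(3,4) x unfolding bij_betw_def by auto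
  then show ?thesis
    using card_permuted_members[OF x \<sigma>] by (simp add: perm_power_prod_BoolZ odd_cover_def)
qed

lemma cubeA_eq: "cubeA = {S. finite S} - cube_pairs"
  unfolding cubeA_def cube_pairs_def BoolZ_carrier ..

lemma cube_pair_notin_cubeA:
  assumes "n \<noteq> 0"
  shows "{a, a + n ^ 3} \<notin> cubeA"
proof -
  have "{a + n ^ 3, a} \<in> cube_pairs"
    unfolding cube_pairs_iff is_cube_def using assms by (intro exI[of _ "a + n ^ 3"] exI[of _ a]) auto
  then show ?thesis by (simp add: cubeA_eq insert_commute)
qed

section \<open>The three properties of \<open>cubeA\<close>\<close>

lemma odd_cover_in_cubeA:
  assumes "X \<subseteq> carrier BoolZ" "infinite X" "2 \<le> k"
  obtains S where "S \<subseteq> X" "finite S" "card S = k" "odd_cover S \<in> cubeA"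
proof -
  have fin: "\<forall>s\<in>X. finite s" using assms(1) by (auto simp: BoolZ_carrier)
  obtain S0 where S0: "finite S0" "card S0 = k - 2" "S0 \<subseteq> X"
    using infinite_arbitrarily_large assms(2) by blast
  have "finite (odd_cover S0)" using S0 fin by (intro finite_odd_cover) auto
  moreover have "infinite (X - S0)" using assms(2) S0 by auto
  ultimately obtain y z where yz: "y \<in> X - S0" "z \<in> X - S0" "y \<noteq> z"
    and notin: "sym_diff (odd_cover S0) (sym_diff y z) \<notin> cube_pairs"
    using finite_sym_diff_sym_diff_notin_cube_pairs fin by (meson DiffD1)
  define S where "S = insert y (insert z S0)"
  have S: "S \<subseteq> X" "finite S" "card S = k" using S0 yz assms(3) by (auto simp: S_def)
  have "odd_cover S = sym_diff (odd_cover S0) (sym_diff y z)"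
    using yz S0 by (simp add: S_def odd_cover_insert) auto
  moreover have "finite (odd_cover S)" using S fin by (intro finite_odd_cover) auto
  ultimately have "odd_cover S \<in> cubeA" using notin by (simp add: cubeA_eq)
  with S show ?thesis by (rule that)
qed

lemma ramsey_product_subset_cubeA:
  assumes "2 \<le> length ms" "\<forall>m\<in>set ms. odd m"
  shows "ramsey_product_subset BoolZ ms cubeA"
  unfolding ramsey_product_subset_def
proof (intro conjI allI impI)
  show "cubeA \<subseteq> carrier BoolZ" unfolding cubeA_def by blast
next
  fix X assume X: "X \<subseteq> carrier BoolZ \<and> infinite X"
  then obtain S where S: "S \<subseteq> X" "finite S" "card S = length ms" "odd_cover S \<in> cubeA"
    using odd_cover_in_cubeA assms(1) by blast
  obtain x where x: "bij_betw x {..<length ms} S"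
    using ex_bij_betw_nat_finite[OF S(2)] S(3) by (auto simp: atLeast0LessThan)
  have "\<forall>s\<in>S. finite s" using S(1) X by (auto simp: BoolZ_carrier)
  with x S assms(2) show "\<exists>x. x ` {..<length ms} \<subseteq> X \<and> inj_on x {..<length ms} \<and>
      (\<forall>\<sigma>. \<sigma> permutes {..<length ms} \<longrightarrow> perm_power_prod BoolZ ms x \<sigma> \<in> cubeA)"
    by (intro exI[of _ x]) (auto simp: bij_betw_def perm_power_prod_BoolZ_eq_odd_cover)
qed

lemma no_large_subset_with_quotients_in_cubeA:
  "\<not> (\<exists>B. large_subset BoolZ B \<and>
        {b \<otimes>\<^bsub>BoolZ\<^esub> inv\<^bsub>BoolZ\<^esub> b' | b b'. b \<in> B \<and> b' \<in> B} \<subseteq> cubeA)"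
proof
  assume "\<exists>B. large_subset BoolZ B \<and>
            {b \<otimes>\<^bsub>BoolZ\<^esub> inv\<^bsub>BoolZ\<^esub> b' | b b'. b \<in> B \<and> b' \<in> B} \<subseteq> cubeA"
  then obtain B where large: "large_subset BoolZ B"
    and quotients: "{b \<otimes>\<^bsub>BoolZ\<^esub> inv\<^bsub>BoolZ\<^esub> b' | b b'. b \<in> B \<and> b' \<in> B} \<subseteq> cubeA"
    by blast
  have B: "B \<subseteq> carrier BoolZ" using large[unfolded large_subset_def] by (rule conjunct1)
  obtain F where "finite F \<and> F \<subseteq> carrier BoolZ \<and>
      carrier BoolZ = (\<Union>f\<in>F. (\<lambda>b. f \<otimes>\<^bsub>BoolZ\<^esub> b) ` B)"
    using large[unfolded large_subset_def, THEN conjunct2] ..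
  then have "finite F" and cover: "carrier BoolZ = (\<Union>f\<in>F. (\<lambda>b. f \<otimes>\<^bsub>BoolZ\<^esub> b) ` B)"
    by simp_all
  have "\<forall>n::int. \<exists>f. f \<in> F \<and> (\<exists>b\<in>B. {n} = sym_diff f b)"
  proof
    fix n :: int
    have "{n} \<in> carrier BoolZ" by (simp add: BoolZ_carrier)
    then show "\<exists>f. f \<in> F \<and> (\<exists>b\<in>B. {n} = sym_diff f b)" using cover by (auto simp: BoolZ_mult)
  qed
  from choice[OF this] obtain col where "\<forall>n. col n \<in> F \<and> (\<exists>b\<in>B. {n} = sym_diff (col n) b)" ..
  then have col: "\<And>n. col n \<in> F" "\<And>n. \<exists>b\<in>B. {n} = sym_diff (col n) b" by simp_all
  have "range col \<subseteq> F" using col(1) by auto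
  then have "finite (range col)" using \<open>finite F\<close> by (rule finite_subset)
  then obtain a n where "0 < n" and same: "col (a + n ^ 3) = col a" using cube_recurrence by blast
  obtain b where "b \<in> B" and b: "{a} = sym_diff (col a) b" using col(2) by blast
  obtain b' where "b' \<in> B" and b': "{a + n ^ 3} = sym_diff (col a) b'"
    using col(2)[of "a + n ^ 3"] unfolding same by blast
  have "b = sym_diff (col a) {a}" "b' = sym_diff (col a) {a + n ^ 3}"
    unfolding b b' by (simp_all only: sym_diff_sym_diff_left)
  then have "sym_diff b b' = sym_diff {a} {a + n ^ 3}" by (simp add: sym_diff_cancel_left)
  also have "\<dots> = {a, a + n ^ 3}" using \<open>0 < n\<close> by auto
  finally have "sym_diff b b' = {a, a + n ^ 3}" .
  moreover have "inv\<^bsub>BoolZ\<^esub> b' = b'" using B \<open>b' \<in> B\<close> by (intro inv_BoolZ) (auto simp: BoolZ_carrier)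
  ultimately have "b \<otimes>\<^bsub>BoolZ\<^esub> inv\<^bsub>BoolZ\<^esub> b' = {a, a + n ^ 3}" by (simp add: BoolZ_mult)
  moreover have "b \<otimes>\<^bsub>BoolZ\<^esub> inv\<^bsub>BoolZ\<^esub> b' \<in> cubeA" using quotients \<open>b \<in> B\<close> \<open>b' \<in> B\<close> by blast
  ultimately show False using cube_pair_notin_cubeA \<open>0 < n\<close> by simp
qed

lemma group_topology_product_nhd:
  assumes "monoid G" "group_topology G T" "openin T U" "\<one>\<^bsub>G\<^esub> \<in> U"
  obtains V where "openin T V" "\<one>\<^bsub>G\<^esub> \<in> V" "\<And>a b. a \<in> V \<Longrightarrow> b \<in> V \<Longrightarrow> a \<otimes>\<^bsub>G\<^esub> b \<in> U"
proof -
  have top: "topspace T = carrier G"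
    and mult: "continuous_map (prod_topology T T) T (\<lambda>(x, y). x \<otimes>\<^bsub>G\<^esub> y)"
    using assms(2) unfolding group_topology_def by auto
  define W where "W = {z \<in> topspace (prod_topology T T). (\<lambda>(x, y). x \<otimes>\<^bsub>G\<^esub> y) z \<in> U}"
  have "openin (prod_topology T T) W"
    unfolding W_def using mult assms(3) by (rule openin_continuous_map_preimage)
  moreover have "(\<one>\<^bsub>G\<^esub>, \<one>\<^bsub>G\<^esub>) \<in> W"
    using assms(1,4) by (simp add: W_def top)
  ultimately have "\<exists>V1 V2. openin T V1 \<and> openin T V2 \<and> \<one>\<^bsub>G\<^esub> \<in> V1 \<and> \<one>\<^bsub>G\<^esub> \<in> V2 \<and> V1 \<times> V2 \<subseteq> W"
    unfolding openin_prod_topology_alt by blast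
  then obtain V1 V2 where V: "openin T V1" "openin T V2" "\<one>\<^bsub>G\<^esub> \<in> V1" "\<one>\<^bsub>G\<^esub> \<in> V2"
    and "V1 \<times> V2 \<subseteq> W" by blast
  show ?thesis
  proof (rule that)
    show "openin T (V1 \<inter> V2)" using V(1,2) by (rule openin_Int)
    show "\<one>\<^bsub>G\<^esub> \<in> V1 \<inter> V2" using V(3,4) by blast
    fix a b assume "a \<in> V1 \<inter> V2" "b \<in> V1 \<inter> V2"
    then have "(a, b) \<in> W" using \<open>V1 \<times> V2 \<subseteq> W\<close> by blast
    then show "a \<otimes>\<^bsub>G\<^esub> b \<in> U" by (simp add: W_def)
  qed
qed

lemma cubeA_not_nhd_of_identity:
  "\<not> (\<exists>T. totally_bounded_group_topology BoolZ T \<and> nhd_of_identity BoolZ T cubeA)"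
proof
  assume "\<exists>T. totally_bounded_group_topology BoolZ T \<and> nhd_of_identity BoolZ T cubeA"
  then obtain T U where T: "totally_bounded_group_topology BoolZ T"
    and U: "openin T U" "\<one>\<^bsub>BoolZ\<^esub> \<in> U" "U \<subseteq> cubeA"
    unfolding nhd_of_identity_def by blast
  then have "group_topology BoolZ T" unfolding totally_bounded_group_topology_def by blast
  then obtain V where V: "openin T V" "\<one>\<^bsub>BoolZ\<^esub> \<in> V"
    and VV: "\<And>a b. a \<in> V \<Longrightarrow> b \<in> V \<Longrightarrow> a \<otimes>\<^bsub>BoolZ\<^esub> b \<in> U"
    using group_topology_product_nhd[OF group.is_monoid[OF group_BoolZ] _ U(1,2)] by blast
  have "V \<subseteq> carrier BoolZ"
    using openin_subset[OF V(1)] \<open>group_topology BoolZ T\<close> unfolding group_topology_def by simp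
  moreover have "\<exists>F. finite F \<and> F \<subseteq> carrier BoolZ \<and>
      carrier BoolZ = (\<Union>f\<in>F. (\<lambda>u. f \<otimes>\<^bsub>BoolZ\<^esub> u) ` V)"
    using V by (intro T[unfolded totally_bounded_group_topology_def, THEN conjunct2, rule_format]) blast
  ultimately have "large_subset BoolZ V" unfolding large_subset_def by (rule conjI)
  moreover have "b \<otimes>\<^bsub>BoolZ\<^esub> inv\<^bsub>BoolZ\<^esub> b' \<in> cubeA" if "b \<in> V" "b' \<in> V" for b b'
  proof -
    have "finite b'" using \<open>V \<subseteq> carrier BoolZ\<close> that by (auto simp: BoolZ_carrier)
    then have "inv\<^bsub>BoolZ\<^esub> b' = b'" by (rule inv_BoolZ)
    then show ?thesis using VV[OF that] U(3) by auto
  qed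
  then have "{b \<otimes>\<^bsub>BoolZ\<^esub> inv\<^bsub>BoolZ\<^esub> b' | b b'. b \<in> V \<and> b' \<in> V} \<subseteq> cubeA" by blast
  ultimately show False using no_large_subset_with_quotients_in_cubeA by blast
qed

theorem proposition5p4:
  shows "(\<forall>ms::int list. length ms \<ge> 2 \<and> (\<forall>m\<in>set ms. odd m) \<longrightarrow>
            ramsey_product_subset BoolZ ms cubeA)
       \<and> \<not> (\<exists>B. large_subset BoolZ B \<and>
              {b \<otimes>\<^bsub>BoolZ\<^esub> inv\<^bsub>BoolZ\<^esub> b' | b b'. b \<in> B \<and> b' \<in> B} \<subseteq> cubeA)
       \<and> \<not> (\<exists>T. totally_bounded_group_topology BoolZ T \<and> nhd_of_identity BoolZ T cubeA)"
  using ramsey_product_subset_cubeA no_large_subset_with_quotients_in_cubeA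
    cubeA_not_nhd_of_identity
  by blast

end
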